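(* Let $\mathcal{A}$ be an infinite set with a height function, let $\mathcal{A}(N)$ be the finite set of its elements of height at most $N$, and assume $\log|\mathcal{A}(N)|\asymp\log N$. For each prime $p$ let $f_p:\mathcal{A}\to\{-1,0,1\}$. Suppose there exist $\xi>0$ and multiplicative functions $\eta_+,\eta_-$ with values in $[0,1]$ such that for every pair of coprime positive squarefree integers $q_-,q_+$ with $q_-q_+\le N^{\xi/2}$, $$\frac{1}{|\mathcal{A}(N)|}\left|\left\{x\in\mathcal{A}(N): p\mid q_-\Rightarrow f_p(x)=-1,\ p\mid q_+\Rightarrow f_p(x)=1\right\}\right|=\eta_-(q_-)\eta_+(q_+)+O(N^{-\xi}),$$ and there are constants $c_+,c_-,C>0$ and $M_+,M_-$ such that, uniformly for all $N\ge2$: $\eta_\pm(p)\ll1/p$; $\sum_{p\le N}\eta_\pm(p)=c_\pm\log\log N+M_\pm+O(1/\log N)$; and $\max_{x\in\mathcal{A}(N)}\prod_{p:\,f_p(x)\ne0}p\ll N^C$. Then for every $A_0>0$ there exists $\delta(A_0)>0$ such that $$\left|\left\{x\in\mathcal{A}(N):\sum_pf_p(x)\ge A_0\log\log N\right\}\right|\gg_{A_0}|\mathcal{A}(N)|(\log N)^{-\delta(A_0)}$$ for all $N\ge2$. *)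

theory Defs
  imports Complex_Main "HOL-Computational_Algebra.Primes" "HOL-Computational_Algebra.Squarefree"
begin

definition multiplicative :: "(nat \<Rightarrow> real) \<Rightarrow> bool" where
  "multiplicative g \<longleftrightarrow> g 1 = 1 \<and> (\<forall>m n. m > 0 \<longrightarrow> n > 0 \<longrightarrow> coprime m n \<longrightarrow> g (m * n) = g m * g n)"

definition upto_height :: "'a set \<Rightarrow> ('a \<Rightarrow> real) \<Rightarrow> real \<Rightarrow> 'a set" where
  "upto_height A h N = {x \<in> A. h x \<le> N}"

end

theory Submission
  imports Defs "HOL-Library.FuncSet" "HOL-Analysis.Convex" "HOL-Real_Asymp.Real_Asymp"
begin

(* Cut the primes into k ~ alpha * log log N consecutive blocks,
   each of eta_+-mass at least sigma > 0 by the Mertens-type estimate, and all lying below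
   N^(eps/(4k)).  For x in A(N) let Z(x) count the tuples made of one prime p with f_p(x) = 1
   from every block, and S(x) the primes p <= N^(eps/4) with f_p(x) = -1.  The level of
   distribution yields the first and second moments of Z and the first moment of Z * S up to
   negligible errors, since all moduli involved stay below N^(eps/2).  Markov's inequality for S
   and Cauchy-Schwarz for Z then give at least
   |A(N)| (sigma/(1+sigma))^k / 8 >= |A(N)| (log N)^(-delta) / 8
   elements x with Z(x) > 0 and S(x) = O(log log N).  Such an x has k primes with f_p(x) = 1,
   few small primes with f_p(x) = -1, and, by the bound on the product of its support, only O(1)
   primes p > N^(eps/4) with f_p(x) /= 0; so sum_p f_p(x) >= A_0 log log N. *)

lemma prime_dvd_prod_primes_iff:
  fixes Q :: "'a::factorial_semiring set"
  assumes "finite Q" "\<And>q. q \<in> Q \<Longrightarrow> prime q" "prime p"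
  shows "p dvd \<Prod>Q \<longleftrightarrow> p \<in> Q"
proof
  assume "p dvd \<Prod>Q"
  then obtain q where "q \<in> Q" "p dvd q"
    using assms(1,3) by (auto simp: prime_dvd_prod_iff)
  then show "p \<in> Q"
    using assms(2,3) primes_dvd_imp_eq by blast
qed (use assms(1) in \<open>auto intro: dvd_prodI\<close>)

lemma squarefree_prod_primes:
  fixes Q :: "'a::factorial_semiring_gcd set"
  assumes "\<And>q. q \<in> Q \<Longrightarrow> prime q"
  shows "squarefree (\<Prod>Q)"
  using assms by (intro squarefree_prod_coprime) (auto intro: primes_coprime squarefree_prime)

lemma coprime_prod_disjoint_primes:
  fixes Q Q' :: "'a::factorial_semiring_gcd set"
  assumes "\<And>q. q \<in> Q \<union> Q' \<Longrightarrow> prime q" "Q \<inter> Q' = {}"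
  shows "coprime (\<Prod>Q) (\<Prod>Q')"
  using assms by (intro prod_coprime_left prod_coprime_right primes_coprime) auto

lemma multiplicative_prod_primes:
  assumes "multiplicative g" "finite Q" "\<And>q. q \<in> Q \<Longrightarrow> prime q"
  shows "g (\<Prod>Q) = (\<Prod>q\<in>Q. g q)"
  using assms(2,3)
proof (induction Q rule: finite_induct)
  case empty
  then show ?case using assms(1) by (simp add: multiplicative_def)
next
  case (insert q Q)
  have "coprime q (\<Prod>Q)"
    using insert by (intro prod_coprime_right primes_coprime) auto
  moreover have "q > 0" "\<Prod>Q > 0"
    using insert by (auto intro: prime_gt_0_nat prod_pos)
  ultimately show ?case
    using insert assms(1) by (simp add: multiplicative_def)
qed

lemma real_card_le_of_bounded:
  fixes S :: "nat set"
  assumes "\<And>p. p \<in> S \<Longrightarrow> 0 < p \<and> real p \<le> z" "0 \<le> z"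
  shows "real (card S) \<le> z"
proof -
  have "S \<subseteq> {1..nat \<lfloor>z\<rfloor>}"
    using assms by (auto simp: le_nat_floor Suc_le_eq)
  then have "card S \<le> nat \<lfloor>z\<rfloor>"
    using card_mono[of "{1..nat \<lfloor>z\<rfloor>}" S] by simp
  then show ?thesis
    using assms(2) by linarith
qed

lemma finite_bounded_nat_set:
  fixes S :: "nat set"
  assumes "\<And>p. p \<in> S \<Longrightarrow> real p \<le> z"
  shows "finite S"
  by (rule finite_subset[of _ "{..nat \<lfloor>z\<rfloor>}"]) (use assms in \<open>auto simp: le_nat_floor\<close>)

lemma sum_prod_card_eq_sum_PiE_card:
  assumes "finite X" "finite I" "\<And>i. i \<in> I \<Longrightarrow> finite (B i)"
  shows "(\<Sum>x\<in>X. \<Prod>i\<in>I. real (card {b\<in>B i. G i b x}))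
       = (\<Sum>w\<in>PiE I B. real (card {x\<in>X. \<forall>i\<in>I. G i (w i) x}))"
proof -
  have of_bool_prod: "(\<Prod>i\<in>I. of_bool (Q i) :: real) = of_bool (\<forall>i\<in>I. Q i)" for Q
    using assms(2) by (induction I rule: finite_induct) auto
  have "(\<Sum>x\<in>X. \<Prod>i\<in>I. real (card {b\<in>B i. G i b x}))
      = (\<Sum>x\<in>X. \<Prod>i\<in>I. \<Sum>b\<in>B i. of_bool (G i b x))"
    using assms by (simp add: Int_def conj_commute)
  also have "\<dots> = (\<Sum>x\<in>X. \<Sum>w\<in>PiE I B. \<Prod>i\<in>I. of_bool (G i (w i) x))"
    by (simp only: prod_sum_PiE[OF assms(2,3)])
  also have "\<dots> = (\<Sum>x\<in>X. \<Sum>w\<in>PiE I B. of_bool (\<forall>i\<in>I. G i (w i) x))"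
    by (simp only: of_bool_prod)
  also have "\<dots> = (\<Sum>w\<in>PiE I B. \<Sum>x\<in>X. of_bool (\<forall>i\<in>I. G i (w i) x))"
    by (rule sum.swap)
  also have "\<dots> = (\<Sum>w\<in>PiE I B. real (card {x\<in>X. \<forall>i\<in>I. G i (w i) x}))"
    using assms by (simp add: Int_def conj_commute)
  finally show ?thesis .
qed

lemma truncated_second_moment:
  fixes Z S :: "'a \<Rightarrow> real"
  assumes "finite X" "\<And>x. x \<in> X \<Longrightarrow> 0 \<le> Z x" "\<And>x. x \<in> X \<Longrightarrow> 0 \<le> S x" "0 < M"
    and "0 \<le> a" "a \<le> (\<Sum>x\<in>X. Z x) - (\<Sum>x\<in>X. Z x * S x) / M"
  shows "a\<^sup>2 \<le> real (card {x\<in>X. 0 < Z x \<and> S x < M}) * (\<Sum>x\<in>X. (Z x)\<^sup>2)"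
proof -
  define G where "G = {x\<in>X. 0 < Z x \<and> S x < M}"
  have markov: "Z x - Z x * S x / M \<le> (if 0 < Z x \<and> S x < M then Z x else 0)"
    if "x \<in> X" for x
  proof (cases "0 < Z x \<and> S x < M")
    case True
    then show ?thesis using assms(3,4) that by simp
  next
    case False
    then have "Z x = 0 \<or> M \<le> S x" using assms(2) that by force
    then have "Z x * M \<le> Z x * S x" using assms(2) that by (auto intro: mult_left_mono)
    then have "Z x \<le> Z x * S x / M" using assms(4) by (simp add: pos_le_divide_eq mult.commute)
    then show ?thesis using False by simp
  qed
  have "a \<le> (\<Sum>x\<in>X. Z x - Z x * S x / M)"
    using assms(6) by (simp add: sum_subtractf sum_divide_distrib)
  also have "\<dots> \<le> (\<Sum>x\<in>X. if 0 < Z x \<and> S x < M then Z x else 0)"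
    using markov by (rule sum_mono)
  also have "\<dots> = (\<Sum>x\<in>G. Z x)"
    unfolding G_def by (rule sum.inter_filter[OF assms(1), symmetric])
  finally have "a\<^sup>2 \<le> (\<Sum>x\<in>G. Z x)\<^sup>2"
    using assms(5) by (intro power_mono) auto
  also have "\<dots> \<le> (\<Sum>x\<in>G. (Z x)\<^sup>2) * real (card G)"
    by (rule sum_squared_le_sum_of_squares)
  also have "\<dots> \<le> (\<Sum>x\<in>X. (Z x)\<^sup>2) * real (card G)"
    using assms(1) by (intro mult_right_mono sum_mono2) (auto simp: G_def)
  finally show ?thesis
    by (simp add: G_def mult.commute)
qed

lemma sum_signs_eq_card_diff:
  fixes s :: "'b \<Rightarrow> int"
  assumes "finite F" "\<And>p. p \<in> F \<Longrightarrow> s p \<in> {-1, 1}"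
  shows "(\<Sum>p\<in>F. s p) = int (card {p\<in>F. s p = 1}) - int (card {p\<in>F. s p = -1})"
proof -
  have "(\<Sum>p\<in>F. s p) = (\<Sum>p\<in>F. of_bool (s p = 1) - of_bool (s p = -1))"
    using assms(2) by (intro sum.cong) auto
  then show ?thesis
    using assms(1) by (simp add: sum_subtractf Int_def conj_commute)
qed

lemma sum_pairs_prod_eta_le:
  fixes \<eta> :: "'b \<Rightarrow> real"
  assumes "finite P" "\<And>p. p \<in> P \<Longrightarrow> 0 \<le> \<eta> p"
  shows "(\<Sum>b\<in>P \<times> P. \<Prod>q\<in>{fst b, snd b}. \<eta> q) \<le> (\<Sum>p\<in>P. \<eta> p)\<^sup>2 + (\<Sum>p\<in>P. \<eta> p)"
proof -
  have "(\<Sum>b\<in>P \<times> P. \<Prod>q\<in>{fst b, snd b}. \<eta> q)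
      \<le> (\<Sum>b\<in>P \<times> P. \<eta> (fst b) * \<eta> (snd b) + (if fst b = snd b then \<eta> (fst b) else 0))"
    using assms(2) by (intro sum_mono) (auto simp: mem_Times_iff)
  also have "\<dots> = (\<Sum>p\<in>P. \<Sum>q\<in>P. \<eta> p * \<eta> q + (if p = q then \<eta> p else 0))"
    by (subst sum.cartesian_product') (simp only: fst_conv snd_conv)
  also have "\<dots> = (\<Sum>p\<in>P. \<eta> p * (\<Sum>q\<in>P. \<eta> q) + \<eta> p)"
    using assms(1) by (intro sum.cong refl) (simp add: sum.distrib sum_distrib_left sum.delta)
  also have "\<dots> = (\<Sum>p\<in>P. \<eta> p)\<^sup>2 + (\<Sum>p\<in>P. \<eta> p)"
    by (simp add: sum.distrib sum_distrib_right power2_eq_square)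
  finally show ?thesis .
qed

lemma prod_square_ge_ratio_power:
  fixes s :: "'i \<Rightarrow> real"
  assumes "\<And>i. i \<in> I \<Longrightarrow> \<sigma> \<le> s i" "0 < \<sigma>"
  shows "(\<sigma> / (1 + \<sigma>)) ^ card I * (\<Prod>i\<in>I. (s i)\<^sup>2 + s i) \<le> (\<Prod>i\<in>I. s i)\<^sup>2"
proof -
  have factor_le: "\<sigma> / (1 + \<sigma>) * ((s i)\<^sup>2 + s i) \<le> (s i)\<^sup>2" if "i \<in> I" for i
  proof -
    have "\<sigma> \<le> s i" "0 < s i"
      using assms that by force+
    then have "\<sigma> * s i \<le> s i * s i"
      by (intro mult_right_mono) auto
    then have "\<sigma> * ((s i)\<^sup>2 + s i) \<le> (1 + \<sigma>) * (s i)\<^sup>2"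
      by (simp add: power2_eq_square algebra_simps)
    then show ?thesis
      using assms(2) by (simp add: field_simps)
  qed
  have "(\<sigma> / (1 + \<sigma>)) ^ card I * (\<Prod>i\<in>I. (s i)\<^sup>2 + s i)
      = (\<Prod>i\<in>I. \<sigma> / (1 + \<sigma>) * ((s i)\<^sup>2 + s i))"
    by (simp only: prod.distrib prod_constant)
  also have "\<dots> \<le> (\<Prod>i\<in>I. (s i)\<^sup>2)"
    using assms by (intro prod_mono conjI factor_le less_imp_le[OF mult_pos_pos] add_pos_pos) force+
  also have "\<dots> = (\<Prod>i\<in>I. s i)\<^sup>2"
    by (simp add: prod_power_distrib)
  finally show ?thesis .
qed

section \<open>Sign patterns at a given level\<close>

text \<open>The level of distribution hypothesis, with the squarefree moduli \<open>q\<^sub>-, q\<^sub>+\<close> written as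
  products of disjoint finite sets of primes \<open>Q\<^sub>m, Q\<^sub>p\<close> and the error counted absolutely.\<close>

definition sign_patterns_equidistributed ::
    "'a set \<Rightarrow> (nat \<Rightarrow> 'a \<Rightarrow> int) \<Rightarrow> (nat \<Rightarrow> real) \<Rightarrow> (nat \<Rightarrow> real) \<Rightarrow> real \<Rightarrow> real \<Rightarrow> bool"
  where "sign_patterns_equidistributed X f \<eta>\<^sub>m \<eta>\<^sub>p L E \<longleftrightarrow>
    (\<forall>Q\<^sub>m Q\<^sub>p. finite Q\<^sub>m \<longrightarrow> finite Q\<^sub>p \<longrightarrow> (\<forall>q\<in>Q\<^sub>m \<union> Q\<^sub>p. prime q) \<longrightarrow> Q\<^sub>m \<inter> Q\<^sub>p = {} \<longrightarrow>
      real (\<Prod>Q\<^sub>m * \<Prod>Q\<^sub>p) \<le> L \<longrightarrow>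
      \<bar>real (card {x\<in>X. (\<forall>p\<in>Q\<^sub>m. f p x = -1) \<and> (\<forall>p\<in>Q\<^sub>p. f p x = 1)})
        - real (card X) * ((\<Prod>p\<in>Q\<^sub>m. \<eta>\<^sub>m p) * (\<Prod>p\<in>Q\<^sub>p. \<eta>\<^sub>p p))\<bar> \<le> real (card X) * E)"

lemma sign_patterns_equidistributedI:
  fixes f :: "nat \<Rightarrow> 'a \<Rightarrow> int"
  assumes "finite X" "multiplicative \<eta>\<^sub>m" "multiplicative \<eta>\<^sub>p"
    and density: "\<And>q\<^sub>m q\<^sub>p. q\<^sub>m > 0 \<Longrightarrow> q\<^sub>p > 0 \<Longrightarrow> squarefree q\<^sub>m \<Longrightarrow> squarefree q\<^sub>p \<Longrightarrow>
      coprime q\<^sub>m q\<^sub>p \<Longrightarrow> real (q\<^sub>m * q\<^sub>p) \<le> L \<Longrightarrow>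
      \<bar>real (card {x\<in>X. (\<forall>p. prime p \<longrightarrow> p dvd q\<^sub>m \<longrightarrow> f p x = -1) \<and>
                        (\<forall>p. prime p \<longrightarrow> p dvd q\<^sub>p \<longrightarrow> f p x = 1)}) / real (card X)
        - \<eta>\<^sub>m q\<^sub>m * \<eta>\<^sub>p q\<^sub>p\<bar> \<le> E"
  shows "sign_patterns_equidistributed X f \<eta>\<^sub>m \<eta>\<^sub>p L E"
  unfolding sign_patterns_equidistributed_def
proof (intro allI impI)
  fix Q\<^sub>m Q\<^sub>p :: "nat set"
  assume fin: "finite Q\<^sub>m" "finite Q\<^sub>p" and primes: "\<forall>q\<in>Q\<^sub>m \<union> Q\<^sub>p. prime q"
    and disj: "Q\<^sub>m \<inter> Q\<^sub>p = {}" and level: "real (\<Prod>Q\<^sub>m * \<Prod>Q\<^sub>p) \<le> L"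
  define count where "count = real (card {x\<in>X. (\<forall>p\<in>Q\<^sub>m. f p x = -1) \<and> (\<forall>p\<in>Q\<^sub>p. f p x = 1)})"
  have "{x\<in>X. (\<forall>p. prime p \<longrightarrow> p dvd \<Prod>Q\<^sub>m \<longrightarrow> f p x = -1) \<and> (\<forall>p. prime p \<longrightarrow> p dvd \<Prod>Q\<^sub>p \<longrightarrow> f p x = 1)}
      = {x\<in>X. (\<forall>p\<in>Q\<^sub>m. f p x = -1) \<and> (\<forall>p\<in>Q\<^sub>p. f p x = 1)}"
    using fin primes by (auto simp: prime_dvd_prod_primes_iff)
  moreover have "\<eta>\<^sub>m (\<Prod>Q\<^sub>m) * \<eta>\<^sub>p (\<Prod>Q\<^sub>p) = (\<Prod>p\<in>Q\<^sub>m. \<eta>\<^sub>m p) * (\<Prod>p\<in>Q\<^sub>p. \<eta>\<^sub>p p)"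
    using fin primes assms(2,3) by (simp add: multiplicative_prod_primes)
  ultimately have rel: "\<bar>count / real (card X) - (\<Prod>p\<in>Q\<^sub>m. \<eta>\<^sub>m p) * (\<Prod>p\<in>Q\<^sub>p. \<eta>\<^sub>p p)\<bar> \<le> E"
    using density[of "\<Prod>Q\<^sub>m" "\<Prod>Q\<^sub>p"] fin primes disj level
      coprime_prod_disjoint_primes[of "Q\<^sub>m" "Q\<^sub>p"] squarefree_prod_primes[of "Q\<^sub>m"]
      squarefree_prod_primes[of "Q\<^sub>p"]
    by (simp add: count_def prod_pos prime_gt_0_nat)
  show "\<bar>count - real (card X) * ((\<Prod>p\<in>Q\<^sub>m. \<eta>\<^sub>m p) * (\<Prod>p\<in>Q\<^sub>p. \<eta>\<^sub>p p))\<bar> \<le> real (card X) * E"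
  proof (cases "X = {}")
    case False
    then have "real (card X) > 0"
      using assms(1) by (simp add: card_gt_0_iff)
    moreover have "count - real (card X) * ((\<Prod>p\<in>Q\<^sub>m. \<eta>\<^sub>m p) * (\<Prod>p\<in>Q\<^sub>p. \<eta>\<^sub>p p))
        = real (card X) * (count / real (card X) - (\<Prod>p\<in>Q\<^sub>m. \<eta>\<^sub>m p) * (\<Prod>p\<in>Q\<^sub>p. \<eta>\<^sub>p p))"
      using calculation by (simp add: field_simps)
    ultimately show ?thesis
      using rel by (simp add: abs_mult)
  qed (simp add: count_def)
qed

lemma sign_patterns_equidistributed_mono:
  assumes "sign_patterns_equidistributed X f \<eta>\<^sub>m \<eta>\<^sub>p L E" "L' \<le> L" "E \<le> E'"
  shows "sign_patterns_equidistributed X f \<eta>\<^sub>m \<eta>\<^sub>p L' E'"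
  using assms unfolding sign_patterns_equidistributed_def
  by (meson order.trans mult_left_mono of_nat_0_le_iff)

section \<open>Moments over blocks of primes\<close>

locale prime_block_sieve =
  fixes X :: "'a set" and f :: "nat \<Rightarrow> 'a \<Rightarrow> int" and \<eta>\<^sub>m \<eta>\<^sub>p :: "nat \<Rightarrow> real"
    and P :: "nat \<Rightarrow> nat set" and k :: nat and z L E :: real
  assumes finite_X: "finite X"
    and equidistributed: "sign_patterns_equidistributed X f \<eta>\<^sub>m \<eta>\<^sub>p L E"
    and eta_m_nonneg: "\<And>p. prime p \<Longrightarrow> 0 \<le> \<eta>\<^sub>m p"
    and eta_p_nonneg: "\<And>p. prime p \<Longrightarrow> 0 \<le> \<eta>\<^sub>p p"
    and block_primes: "\<And>i p. i < k \<Longrightarrow> p \<in> P i \<Longrightarrow> prime p \<and> real p \<le> z"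
    and blocks_disjoint: "\<And>i j. i < k \<Longrightarrow> j < k \<Longrightarrow> i \<noteq> j \<Longrightarrow> P i \<inter> P j = {}"
    and one_le_z: "1 \<le> z"
    and E_nonneg: "0 \<le> E"
    and blocks_below_level: "z ^ (2 * k) \<le> L"
begin

definition plus_tuples :: "'a \<Rightarrow> real"
  where "plus_tuples x = (\<Prod>i<k. real (card {p\<in>P i. f p x = 1}))"

definition mass :: "nat \<Rightarrow> real"
  where "mass i = (\<Sum>p\<in>P i. \<eta>\<^sub>p p)"

definition minus_count :: "real \<Rightarrow> 'a \<Rightarrow> real"
  where "minus_count y x = real (card {p. prime p \<and> real p \<le> y \<and> f p x = -1})"

definition minus_mass :: "real \<Rightarrow> real"
  where "minus_mass y = (\<Sum>p | prime p \<and> real p \<le> y. \<eta>\<^sub>m p)"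

lemma finite_block: "i < k \<Longrightarrow> finite (P i)"
  using block_primes by (intro finite_bounded_nat_set) blast

lemma card_block_le: "i < k \<Longrightarrow> real (card (P i)) \<le> z"
  using block_primes one_le_z by (intro real_card_le_of_bounded) (auto intro: prime_gt_0_nat)

lemma power_z_le_level: "z ^ k \<le> L"
  using one_le_z blocks_below_level power_increasing[of k "2 * k" z] by simp

lemma card_choices_le: "real (card (PiE {..<k} P)) \<le> z ^ k"
proof -
  have "real (card (PiE {..<k} P)) = (\<Prod>i<k. real (card (P i)))"
    by (simp add: card_PiE)
  also have "\<dots> \<le> (\<Prod>i<k. z)"
    using card_block_le by (intro prod_mono) auto
  finally show ?thesis
    by simp
qed

lemma choice_in_block: "w \<in> PiE {..<k} P \<Longrightarrow> i < k \<Longrightarrow> w i \<in> P i"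
  by (simp add: PiE_mem)

lemma inj_on_choice:
  assumes "\<And>i. i < k \<Longrightarrow> w i \<in> P i"
  shows "inj_on w {..<k}"
proof (rule inj_onI)
  fix i j assume ij: "i \<in> {..<k}" "j \<in> {..<k}" "w i = w j"
  show "i = j"
  proof (rule ccontr)
    assume "i \<noteq> j"
    then have "P i \<inter> P j = {}"
      using blocks_disjoint ij by simp
    moreover have "w i \<in> P i" "w j \<in> P j"
      using assms ij(1,2) by simp_all
    ultimately show False
      using ij(3) by auto
  qed
qed

lemma count_choice_signs:
  assumes w: "w \<in> PiE {..<k} P"
    and Q: "finite Q" "\<And>q. q \<in> Q \<Longrightarrow> prime q" "Q \<inter> w ` {..<k} = {}" "real (\<Prod>Q) * z ^ k \<le> L"
  shows "\<bar>real (card {x\<in>X. (\<forall>p\<in>Q. f p x = -1) \<and> (\<forall>i<k. f (w i) x = 1)})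
           - real (card X) * ((\<Prod>p\<in>Q. \<eta>\<^sub>m p) * (\<Prod>i<k. \<eta>\<^sub>p (w i)))\<bar> \<le> real (card X) * E"
proof -
  have primes: "\<And>q. q \<in> Q \<union> w ` {..<k} \<Longrightarrow> prime q"
    using Q(2) block_primes choice_in_block[OF w] by auto
  have reindex: "(\<Prod>q\<in>w ` {..<k}. g q) = (\<Prod>i<k. g (w i))" for g :: "nat \<Rightarrow> 'b::comm_monoid_mult"
    using inj_on_choice[OF choice_in_block[OF w]] by (simp add: prod.reindex)
  have "real (\<Prod>Q * \<Prod>(w ` {..<k})) = real (\<Prod>Q) * (\<Prod>i<k. real (w i))"
    by (simp add: reindex)
  also have "\<dots> \<le> real (\<Prod>Q) * (\<Prod>i<k. z)"
    using block_primes choice_in_block[OF w] by (intro mult_left_mono prod_mono) (auto simp: prod_nonneg)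
  also have "\<dots> \<le> L"
    using Q(4) by simp
  finally have level: "real (\<Prod>Q * \<Prod>(w ` {..<k})) \<le> L" .
  have "{x\<in>X. (\<forall>p\<in>Q. f p x = -1) \<and> (\<forall>p\<in>w ` {..<k}. f p x = 1)}
      = {x\<in>X. (\<forall>p\<in>Q. f p x = -1) \<and> (\<forall>i<k. f (w i) x = 1)}"
    by auto
  then show ?thesis
    using equidistributed[unfolded sign_patterns_equidistributed_def, rule_format,
        OF Q(1) finite_imageI[OF finite_lessThan] primes Q(3) level]
    by (simp only: reindex)
qed

lemma count_plus_primes:
  assumes "finite Q" "\<And>q. q \<in> Q \<Longrightarrow> prime q" "real (\<Prod>Q) \<le> L"
  shows "real (card {x\<in>X. \<forall>q\<in>Q. f q x = 1}) \<le> real (card X) * ((\<Prod>q\<in>Q. \<eta>\<^sub>p q) + E)"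
  using equidistributed[unfolded sign_patterns_equidistributed_def, rule_format, of "{}" Q] assms
  by (simp add: abs_le_iff algebra_simps)

lemma sum_choices_prod_eta: "(\<Sum>w\<in>PiE {..<k} P. \<Prod>i<k. \<eta>\<^sub>p (w i)) = (\<Prod>i<k. mass i)"
  unfolding mass_def by (rule prod_sum_PiE[symmetric]) (auto simp: finite_block)

lemma sum_plus_tuples_eq_sum_choices:
  "finite Y \<Longrightarrow> (\<Sum>x\<in>Y. plus_tuples x)
     = (\<Sum>w\<in>PiE {..<k} P. real (card {x\<in>Y. \<forall>i<k. f (w i) x = 1}))"
  unfolding plus_tuples_def
  by (subst sum_prod_card_eq_sum_PiE_card) (auto simp: finite_block Ball_def)

lemma first_moment: "real (card X) * ((\<Prod>i<k. mass i) - L * E) \<le> (\<Sum>x\<in>X. plus_tuples x)"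
proof -
  have "real (card (PiE {..<k} P)) * E \<le> L * E"
    using card_choices_le power_z_le_level E_nonneg by (intro mult_right_mono) auto
  then have "real (card X) * ((\<Prod>i<k. mass i) - L * E)
      \<le> real (card X) * ((\<Prod>i<k. mass i) - real (card (PiE {..<k} P)) * E)"
    by (intro mult_left_mono) auto
  also have "\<dots> = (\<Sum>w\<in>PiE {..<k} P. real (card X) * ((\<Prod>i<k. \<eta>\<^sub>p (w i)) - E))"
    by (simp add: sum_choices_prod_eta[symmetric] sum_subtractf right_diff_distrib sum_distrib_left
        mult.left_commute)
  also have "\<dots> \<le> (\<Sum>w\<in>PiE {..<k} P. real (card {x\<in>X. \<forall>i<k. f (w i) x = 1}))"
  proof (rule sum_mono)
    fix w assume w: "w \<in> PiE {..<k} P"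
    have "\<bar>real (card {x\<in>X. (\<forall>p\<in>{}. f p x = -1) \<and> (\<forall>i<k. f (w i) x = 1)})
        - real (card X) * ((\<Prod>p\<in>{}. \<eta>\<^sub>m p) * (\<Prod>i<k. \<eta>\<^sub>p (w i)))\<bar> \<le> real (card X) * E"
      by (rule count_choice_signs[OF w]) (use power_z_le_level in simp_all)
    then show "real (card X) * ((\<Prod>i<k. \<eta>\<^sub>p (w i)) - E) \<le> real (card {x\<in>X. \<forall>i<k. f (w i) x = 1})"
      by (simp add: abs_le_iff right_diff_distrib)
  qed
  also have "\<dots> = (\<Sum>x\<in>X. plus_tuples x)"
    by (rule sum_plus_tuples_eq_sum_choices[OF finite_X, symmetric])
  finally show ?thesis .
qed

lemma count_minus_prime_choice:
  assumes w: "w \<in> PiE {..<k} P" and p: "prime p" "real p \<le> y" and level: "z ^ k * y \<le> L"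
  shows "real (card {x\<in>{x\<in>X. f p x = -1}. \<forall>i<k. f (w i) x = 1})
    \<le> real (card X) * (\<eta>\<^sub>m p * (\<Prod>i<k. \<eta>\<^sub>p (w i)) + E)"
proof (cases "p \<in> w ` {..<k}")
  case True
  then have empty: "{x\<in>{x\<in>X. f p x = -1}. \<forall>i<k. f (w i) x = 1} = {}"
    by force
  have "0 \<le> \<eta>\<^sub>m p * (\<Prod>i<k. \<eta>\<^sub>p (w i))"
    using p block_primes choice_in_block[OF w]
    by (auto intro!: mult_nonneg_nonneg prod_nonneg eta_m_nonneg eta_p_nonneg)
  then have "0 \<le> real (card X) * (\<eta>\<^sub>m p * (\<Prod>i<k. \<eta>\<^sub>p (w i)) + E)"
    using E_nonneg by simp
  then show ?thesis
    by (simp only: empty card.empty of_nat_0)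
next
  case False
  have "real (\<Prod>{p}) * z ^ k \<le> y * z ^ k"
    using p one_le_z by (intro mult_right_mono) auto
  then have "real (\<Prod>{p}) * z ^ k \<le> L"
    using level by (simp add: mult.commute)
  then have "\<bar>real (card {x\<in>X. (\<forall>q\<in>{p}. f q x = -1) \<and> (\<forall>i<k. f (w i) x = 1)})
      - real (card X) * ((\<Prod>q\<in>{p}. \<eta>\<^sub>m q) * (\<Prod>i<k. \<eta>\<^sub>p (w i)))\<bar> \<le> real (card X) * E"
    using False p by (intro count_choice_signs[OF w]) auto
  moreover have "{x\<in>X. (\<forall>q\<in>{p}. f q x = -1) \<and> (\<forall>i<k. f (w i) x = 1)}
      = {x\<in>{x\<in>X. f p x = -1}. \<forall>i<k. f (w i) x = 1}"
    by auto
  ultimately show ?thesis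
    by (simp add: abs_le_iff algebra_simps)
qed

lemma twisted_first_moment:
  assumes "0 \<le> y" "z ^ k * y \<le> L"
  shows "(\<Sum>x\<in>X. plus_tuples x * minus_count y x)
    \<le> real (card X) * (minus_mass y * (\<Prod>i<k. mass i) + L * E)"
proof -
  define S where "S = {p. prime p \<and> real p \<le> y}"
  define n where "n = real (card X)"
  have finite_S: "finite S"
    unfolding S_def by (rule finite_bounded_nat_set) auto
  have "(\<Sum>x\<in>X. plus_tuples x * minus_count y x)
      = (\<Sum>x\<in>X. \<Sum>p\<in>S. of_bool (f p x = -1) * plus_tuples x)"
    using finite_S
    by (simp add: minus_count_def S_def sum_distrib_right[symmetric] Int_def conj_assoc mult.commute)
  also have "\<dots> = (\<Sum>p\<in>S. \<Sum>x\<in>{x\<in>X. f p x = -1}. plus_tuples x)"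
    using finite_X by (subst sum.swap) (simp add: Int_def)
  also have "\<dots> = (\<Sum>p\<in>S. \<Sum>w\<in>PiE {..<k} P.
                     real (card {x\<in>{x\<in>X. f p x = -1}. \<forall>i<k. f (w i) x = 1}))"
    using finite_X by (simp add: sum_plus_tuples_eq_sum_choices)
  also have "\<dots> \<le> (\<Sum>p\<in>S. \<Sum>w\<in>PiE {..<k} P. n * (\<eta>\<^sub>m p * (\<Prod>i<k. \<eta>\<^sub>p (w i)) + E))"
    using count_minus_prime_choice assms(2) unfolding n_def S_def by (intro sum_mono) auto
  also have "\<dots> = n * ((\<Sum>p\<in>S. \<eta>\<^sub>m p) * (\<Prod>i<k. mass i)
                        + real (card S) * real (card (PiE {..<k} P)) * E)"
  proof -
    have "(\<Sum>w\<in>PiE {..<k} P. n * (\<eta>\<^sub>m p * (\<Prod>i<k. \<eta>\<^sub>p (w i)) + E))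
        = n * (\<eta>\<^sub>m p * (\<Prod>i<k. mass i) + real (card (PiE {..<k} P)) * E)" for p
      by (simp add: sum_choices_prod_eta[symmetric] sum.distrib sum_distrib_left[symmetric]
          algebra_simps)
    then show ?thesis
      by (simp add: sum.distrib sum_distrib_left[symmetric] sum_distrib_right[symmetric]
          sum_choices_prod_eta algebra_simps)
  qed
  also have "\<dots> \<le> n * ((\<Sum>p\<in>S. \<eta>\<^sub>m p) * (\<Prod>i<k. mass i) + L * E)"
  proof -
    have "real (card S) \<le> y"
      using assms(1) by (intro real_card_le_of_bounded) (auto simp: S_def prime_gt_0_nat)
    then have "real (card S) * real (card (PiE {..<k} P)) \<le> y * z ^ k"
      using card_choices_le assms(1) by (intro mult_mono) auto
    then have "real (card S) * real (card (PiE {..<k} P)) * E \<le> L * E"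
      using assms(2) E_nonneg by (intro mult_right_mono) (auto simp: mult.commute)
    then show ?thesis
      by (intro mult_left_mono) (auto simp: n_def)
  qed
  finally show ?thesis
    by (simp add: S_def n_def minus_mass_def)
qed

lemma count_pair_choice:
  assumes w: "w \<in> PiE {..<k} (\<lambda>i. P i \<times> P i)"
  shows "real (card {x\<in>X. \<forall>i<k. f (fst (w i)) x = 1 \<and> f (snd (w i)) x = 1})
    \<le> real (card X) * ((\<Prod>i<k. \<Prod>q\<in>{fst (w i), snd (w i)}. \<eta>\<^sub>p q) + E)"
proof -
  define D where "D i = {fst (w i), snd (w i)}" for i
  have D_block: "D i \<subseteq> P i" if "i < k" for i
    using PiE_mem[OF w, of i] that by (auto simp: D_def mem_Times_iff)
  have D_disjoint: "D i \<inter> D j = {}" if "i \<in> {..<k}" "j \<in> {..<k}" "i \<noteq> j" for i j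
    using blocks_disjoint[of i j] D_block[of i] D_block[of j] that by auto
  have finite_D: "finite (D i)" for i
    by (simp add: D_def)
  have prod_D: "(\<Prod>q\<in>(\<Union>i<k. D i). g q) = (\<Prod>i<k. \<Prod>q\<in>D i. g q)" for g :: "nat \<Rightarrow> real"
    using finite_D D_disjoint by (intro prod.UNION_disjoint) blast+
  have "(\<Prod>q\<in>D i. real q) \<le> z\<^sup>2" if "i < k" for i
  proof -
    have "(\<Prod>q\<in>D i. real q) \<le> z ^ card (D i)"
      using D_block[OF that] block_primes[OF that] one_le_z by (intro prod_le_power) (auto simp: D_def)
    also have "\<dots> \<le> z\<^sup>2"
      using one_le_z by (intro power_increasing) (auto simp: D_def card_insert_if)
    finally show ?thesis .
  qed
  then have "real (\<Prod>(\<Union>i<k. D i)) \<le> z ^ (2 * k)"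
    using prod_mono[of "{..<k}" "\<lambda>i. \<Prod>q\<in>D i. real q" "\<lambda>_. z\<^sup>2"]
    by (simp add: prod_D prod_nonneg power_mult)
  then have "real (card {x\<in>X. \<forall>q\<in>(\<Union>i<k. D i). f q x = 1})
      \<le> real (card X) * ((\<Prod>q\<in>(\<Union>i<k. D i). \<eta>\<^sub>p q) + E)"
    using blocks_below_level D_block block_primes
    by (intro count_plus_primes) (auto simp: D_def)
  moreover have "{x\<in>X. \<forall>q\<in>(\<Union>i<k. D i). f q x = 1}
      = {x\<in>X. \<forall>i<k. f (fst (w i)) x = 1 \<and> f (snd (w i)) x = 1}"
    by (auto simp: D_def)
  ultimately show ?thesis
    unfolding prod_D by (simp only: D_def)
qed

lemma card_pair_choices_le: "real (card (PiE {..<k} (\<lambda>i. P i \<times> P i))) \<le> z ^ (2 * k)"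
proof -
  have "real (card (PiE {..<k} (\<lambda>i. P i \<times> P i))) = (\<Prod>i<k. real (card (P i)) * real (card (P i)))"
    by (simp add: card_PiE card_cartesian_product)
  also have "\<dots> \<le> (\<Prod>i<k. z * z)"
    using one_le_z by (intro prod_mono conjI mult_mono card_block_le) auto
  finally show ?thesis
    by (simp add: power_mult_distrib mult_2 power_add)
qed

text \<open>A pair of tuples uses at most two primes per block, hence moduli up to \<open>z ^ (2 * k)\<close>;
  pairs with a common prime in block \<open>i\<close> produce the term \<open>mass i\<close> next to \<open>(mass i)\<^sup>2\<close>.\<close>

lemma second_moment:
  "(\<Sum>x\<in>X. (plus_tuples x)\<^sup>2) \<le> real (card X) * ((\<Prod>i<k. (mass i)\<^sup>2 + mass i) + L * E)"
proof -
  define PP where "PP = (\<lambda>i. P i \<times> P i)"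
  define g where "g b = (\<Prod>q\<in>{fst b, snd b}. \<eta>\<^sub>p q)" for b :: "nat \<times> nat"
  define n where "n = real (card X)"
  have finite_PP: "finite (PP i)" if "i \<in> {..<k}" for i
    using that by (simp add: PP_def finite_block)
  have square: "(plus_tuples x)\<^sup>2 = (\<Prod>i<k. real (card {b\<in>PP i. f (fst b) x = 1 \<and> f (snd b) x = 1}))" for x
  proof -
    have "{b\<in>PP i. f (fst b) x = 1 \<and> f (snd b) x = 1} = {p\<in>P i. f p x = 1} \<times> {p\<in>P i. f p x = 1}" for i
      by (auto simp: PP_def)
    then show ?thesis
      by (simp add: plus_tuples_def card_cartesian_product power2_eq_square prod.distrib)
  qed
  have "(\<Sum>x\<in>X. (plus_tuples x)\<^sup>2)
      = (\<Sum>w\<in>PiE {..<k} PP. real (card {x\<in>X. \<forall>i<k. f (fst (w i)) x = 1 \<and> f (snd (w i)) x = 1}))"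
    unfolding square using finite_X finite_PP
    by (subst sum_prod_card_eq_sum_PiE_card) (auto simp: Ball_def)
  also have "\<dots> \<le> (\<Sum>w\<in>PiE {..<k} PP. n * ((\<Prod>i<k. g (w i)) + E))"
    using count_pair_choice by (intro sum_mono) (simp add: PP_def g_def n_def)
  also have "\<dots> = n * ((\<Prod>i<k. \<Sum>b\<in>PP i. g b) + real (card (PiE {..<k} PP)) * E)"
    using prod_sum_PiE[OF finite_lessThan finite_PP, where f = "\<lambda>_. g"]
    by (simp add: sum.distrib sum_distrib_left[symmetric] algebra_simps)
  also have "\<dots> \<le> n * ((\<Prod>i<k. (mass i)\<^sup>2 + mass i) + L * E)"
  proof -
    have "(\<Prod>i<k. \<Sum>b\<in>PP i. g b) \<le> (\<Prod>i<k. (mass i)\<^sup>2 + mass i)"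
    proof (rule prod_mono)
      fix i assume "i \<in> {..<k}"
      then have "finite (P i)" "\<And>p. p \<in> P i \<Longrightarrow> 0 \<le> \<eta>\<^sub>p p"
        using finite_block block_primes eta_p_nonneg by auto
      then show "0 \<le> (\<Sum>b\<in>PP i. g b) \<and> (\<Sum>b\<in>PP i. g b) \<le> (mass i)\<^sup>2 + mass i"
        unfolding PP_def g_def mass_def
        by (auto simp: mem_Times_iff intro!: sum_nonneg prod_nonneg sum_pairs_prod_eta_le)
    qed
    moreover have "real (card (PiE {..<k} PP)) \<le> z ^ (2 * k)"
      unfolding PP_def by (rule card_pair_choices_le)
    then have "real (card (PiE {..<k} PP)) * E \<le> L * E"
      using blocks_below_level E_nonneg by (intro mult_right_mono) auto
    ultimately show ?thesis
      by (intro mult_left_mono) (auto simp: n_def)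
  qed
  finally show ?thesis
    by (simp add: n_def)
qed

lemma card_plus_primes_ge:
  assumes "0 < plus_tuples x" "finite {p. prime p \<and> f p x \<noteq> 0}"
  shows "k \<le> card {p. prime p \<and> f p x = 1}"
proof -
  have "\<exists>p. p \<in> P i \<and> f p x = 1" if "i < k" for i
  proof (rule ccontr)
    assume "\<not> (\<exists>p. p \<in> P i \<and> f p x = 1)"
    then have "{p\<in>P i. f p x = 1} = {}"
      by auto
    then have "real (card {p\<in>P i. f p x = 1}) = 0"
      by (simp only: card.empty of_nat_0)
    then have "plus_tuples x = 0"
      unfolding plus_tuples_def using that by (intro prod_zero bexI[of _ i]) simp_all
    then show False
      using assms(1) by simp
  qed
  then obtain g where g: "\<And>i. i < k \<Longrightarrow> g i \<in> P i \<and> f (g i) x = 1"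
    by metis
  have "g ` {..<k} \<subseteq> {p. prime p \<and> f p x = 1}"
    using g block_primes by auto
  moreover have "finite {p. prime p \<and> f p x = 1}"
    using assms(2) by (rule rev_finite_subset) auto
  ultimately have "card (g ` {..<k}) \<le> card {p. prime p \<and> f p x = 1}"
    by (intro card_mono)
  moreover have "card (g ` {..<k}) = k"
    using card_image[OF inj_on_choice[of g]] g by simp
  ultimately show ?thesis
    by simp
qed

lemma signed_sum_ge:
  assumes signs: "\<And>p. prime p \<Longrightarrow> f p x \<in> {-1, 0, 1}"
    and finite_support: "finite {p. prime p \<and> f p x \<noteq> 0}"
    and positive: "0 < plus_tuples x"
  shows "real k - minus_count y x - real (card {p. prime p \<and> f p x \<noteq> 0 \<and> y < real p})
    \<le> real_of_int (\<Sum>p | prime p \<and> f p x \<noteq> 0. f p x)"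
proof -
  define F where "F = {p. prime p \<and> f p x \<noteq> 0}"
  have "{p\<in>F. f p x = 1} = {p. prime p \<and> f p x = 1}"
    by (auto simp: F_def)
  then have "k \<le> card {p\<in>F. f p x = 1}"
    using card_plus_primes_ge[OF positive finite_support] by simp
  moreover have "card {p\<in>F. f p x = -1}
      \<le> card {p. prime p \<and> real p \<le> y \<and> f p x = -1} + card {p. prime p \<and> f p x \<noteq> 0 \<and> y < real p}"
  proof -
    have "{p\<in>F. f p x = -1}
        \<subseteq> {p. prime p \<and> real p \<le> y \<and> f p x = -1} \<union> {p. prime p \<and> f p x \<noteq> 0 \<and> y < real p}"
      by (auto simp: F_def)
    moreover have "finite {p. prime p \<and> real p \<le> y \<and> f p x = -1}"
      by (rule finite_bounded_nat_set) auto
    moreover have "finite {p. prime p \<and> f p x \<noteq> 0 \<and> y < real p}"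
      using finite_support by (rule rev_finite_subset) auto
    ultimately have "card {p\<in>F. f p x = -1}
        \<le> card ({p. prime p \<and> real p \<le> y \<and> f p x = -1} \<union> {p. prime p \<and> f p x \<noteq> 0 \<and> y < real p})"
      by (intro card_mono) simp_all
    then show ?thesis
      using card_Un_le order.trans by blast
  qed
  moreover have "(\<Sum>p\<in>F. f p x) = int (card {p\<in>F. f p x = 1}) - int (card {p\<in>F. f p x = -1})"
    using finite_support signs by (intro sum_signs_eq_card_diff) (auto simp: F_def)
  ultimately show ?thesis
    unfolding F_def minus_count_def by linarith
qed

end

locale prime_block_sieve_mass = prime_block_sieve +
  fixes \<sigma> :: real
  assumes mass_ge: "\<And>i. i < k \<Longrightarrow> \<sigma> \<le> (\<Sum>p\<in>P i. \<eta>\<^sub>p p)"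
    and sigma_pos: "0 < \<sigma>" and sigma_le_1: "\<sigma> \<le> 1"
    and small_error: "8 * (L * E) \<le> \<sigma> ^ (2 * k)"
begin

lemma mass_prod_ge: "\<sigma> ^ k \<le> (\<Prod>i<k. mass i)"
  using prod_mono[of "{..<k}" "\<lambda>_. \<sigma>" mass] mass_ge sigma_pos by (simp add: mass_def)

lemma mass_prod_pos: "0 < (\<Prod>i<k. mass i)"
  using mass_prod_ge sigma_pos zero_less_power[of \<sigma> k] by linarith

lemma error_le_mass_prod: "L * E \<le> (\<Prod>i<k. mass i) / 8"
  using small_error mass_prod_ge power_decreasing[of k "2 * k" \<sigma>] sigma_pos sigma_le_1 by simp

lemma mass_prod_le: "(\<Prod>i<k. mass i) \<le> (\<Prod>i<k. (mass i)\<^sup>2 + mass i)"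
  using mass_ge sigma_pos by (intro prod_mono) (force simp: mass_def)

lemma truncated_first_moment:
  assumes "0 \<le> y" "z ^ k * y \<le> L"
  defines "M \<equiv> 4 * minus_mass y + 1"
  shows "real (card X) * (\<Prod>i<k. mass i) / 2
    \<le> (\<Sum>x\<in>X. plus_tuples x) - (\<Sum>x\<in>X. plus_tuples x * minus_count y x) / M"
proof -
  define n where "n = real (card X)"
  define \<Pi>\<^sub>1 where "\<Pi>\<^sub>1 = (\<Prod>i<k. mass i)"
  have "0 \<le> minus_mass y"
    unfolding minus_mass_def by (intro sum_nonneg eta_m_nonneg) auto
  then have M: "1 \<le> M" "4 * minus_mass y \<le> M"
    by (simp_all add: M_def)
  have n: "0 \<le> n"
    by (simp add: n_def)
  have "minus_mass y * \<Pi>\<^sub>1 \<le> M * (\<Pi>\<^sub>1 / 4)"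
    using mult_right_mono[OF M(2), of "\<Pi>\<^sub>1 / 4"] mass_prod_pos by (simp add: \<Pi>\<^sub>1_def)
  moreover have "\<Pi>\<^sub>1 / 8 * 1 \<le> \<Pi>\<^sub>1 / 8 * M"
    using M(1) mass_prod_pos by (intro mult_left_mono) (auto simp: \<Pi>\<^sub>1_def)
  then have "L * E \<le> M * (\<Pi>\<^sub>1 / 8)"
    using error_le_mass_prod by (simp add: \<Pi>\<^sub>1_def mult.commute)
  ultimately have "n * (minus_mass y * \<Pi>\<^sub>1 + L * E) \<le> n * (M * (3 / 8 * \<Pi>\<^sub>1))"
    using n by (intro mult_left_mono) simp_all
  moreover have "(\<Sum>x\<in>X. plus_tuples x * minus_count y x) \<le> n * (minus_mass y * \<Pi>\<^sub>1 + L * E)"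
    using twisted_first_moment[OF assms(1,2)] unfolding n_def \<Pi>\<^sub>1_def .
  moreover have "n * (M * (3 / 8 * \<Pi>\<^sub>1)) = n * (3 / 8 * \<Pi>\<^sub>1) * M"
    by (simp add: algebra_simps)
  ultimately have "(\<Sum>x\<in>X. plus_tuples x * minus_count y x) \<le> n * (3 / 8 * \<Pi>\<^sub>1) * M"
    by linarith
  then have "(\<Sum>x\<in>X. plus_tuples x * minus_count y x) / M \<le> n * (3 / 8 * \<Pi>\<^sub>1)"
    using M(1) by (simp add: pos_divide_le_eq)
  moreover have "n * (7 / 8 * \<Pi>\<^sub>1) \<le> (\<Sum>x\<in>X. plus_tuples x)"
    using first_moment mult_left_mono[OF error_le_mass_prod n]
    unfolding n_def \<Pi>\<^sub>1_def by (simp add: right_diff_distrib)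
  moreover have "n * (7 / 8 * \<Pi>\<^sub>1) - n * (3 / 8 * \<Pi>\<^sub>1) = n * \<Pi>\<^sub>1 / 2"
    by (simp add: algebra_simps)
  ultimately show ?thesis
    unfolding n_def \<Pi>\<^sub>1_def by linarith
qed

lemma card_plus_tuples_pos_ge:
  assumes "0 \<le> y" "z ^ k * y \<le> L"
  shows "real (card X) / 8 * (\<sigma> / (1 + \<sigma>)) ^ k
    \<le> real (card {x\<in>X. 0 < plus_tuples x \<and> minus_count y x < 4 * minus_mass y + 1})"
proof -
  define n where "n = real (card X)"
  define G where "G = {x\<in>X. 0 < plus_tuples x \<and> minus_count y x < 4 * minus_mass y + 1}"
  define \<Pi>\<^sub>1 where "\<Pi>\<^sub>1 = (\<Prod>i<k. mass i)"
  define \<Pi>\<^sub>2 where "\<Pi>\<^sub>2 = (\<Prod>i<k. (mass i)\<^sup>2 + mass i)"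
  have n: "0 \<le> n"
    by (simp add: n_def)
  have "0 \<le> minus_mass y"
    unfolding minus_mass_def by (intro sum_nonneg eta_m_nonneg) auto
  then have "(n * \<Pi>\<^sub>1 / 2)\<^sup>2 \<le> real (card G) * (\<Sum>x\<in>X. (plus_tuples x)\<^sup>2)"
    unfolding G_def using truncated_first_moment[OF assms] mass_prod_pos n
    by (intro truncated_second_moment[OF finite_X])
      (auto simp: plus_tuples_def minus_count_def prod_nonneg n_def \<Pi>\<^sub>1_def)
  also have "\<dots> \<le> real (card G) * (n * (2 * \<Pi>\<^sub>2))"
  proof (intro mult_left_mono)
    have "L * E \<le> \<Pi>\<^sub>2"
      using error_le_mass_prod mass_prod_le mass_prod_pos by (simp add: \<Pi>\<^sub>2_def)
    then have "n * (\<Pi>\<^sub>2 + L * E) \<le> n * (2 * \<Pi>\<^sub>2)"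
      using n by (intro mult_left_mono) auto
    then show "(\<Sum>x\<in>X. (plus_tuples x)\<^sup>2) \<le> n * (2 * \<Pi>\<^sub>2)"
      using second_moment unfolding n_def \<Pi>\<^sub>2_def by linarith
  qed simp
  finally have G: "(n * \<Pi>\<^sub>1 / 2)\<^sup>2 \<le> real (card G) * (n * (2 * \<Pi>\<^sub>2))" .
  show ?thesis
  proof (cases "n = 0")
    case False
    then have pos: "0 < 8 * n * \<Pi>\<^sub>2"
      using n mass_prod_pos mass_prod_le by (simp add: \<Pi>\<^sub>2_def)
    have "n * n * ((\<sigma> / (1 + \<sigma>)) ^ k * \<Pi>\<^sub>2) \<le> n * n * \<Pi>\<^sub>1\<^sup>2"
      using prod_square_ge_ratio_power[of "{..<k}" \<sigma> mass] mass_ge sigma_pos n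
      by (intro mult_left_mono) (simp_all add: \<Pi>\<^sub>1_def \<Pi>\<^sub>2_def mass_def)
    also have "\<dots> = 4 * (n * \<Pi>\<^sub>1 / 2)\<^sup>2"
      by (simp add: power2_eq_square)
    also have "\<dots> \<le> 4 * (real (card G) * (n * (2 * \<Pi>\<^sub>2)))"
      using G by linarith
    finally have "n / 8 * (\<sigma> / (1 + \<sigma>)) ^ k * (8 * n * \<Pi>\<^sub>2) \<le> real (card G) * (8 * n * \<Pi>\<^sub>2)"
      by (simp add: algebra_simps)
    then show ?thesis
      using pos unfolding n_def G_def by (rule mult_right_le_imp_le)
  qed (simp add: n_def)
qed

theorem card_large_signed_sum:
  assumes signs: "\<And>x p. x \<in> X \<Longrightarrow> prime p \<Longrightarrow> f p x \<in> {-1, 0, 1}"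
    and finite_support: "\<And>x. x \<in> X \<Longrightarrow> finite {p. prime p \<and> f p x \<noteq> 0}"
    and y: "0 \<le> y" "z ^ k * y \<le> L"
    and few_large: "\<And>x. x \<in> X \<Longrightarrow> real (card {p. prime p \<and> f p x \<noteq> 0 \<and> y < real p}) \<le> B"
    and enough_blocks: "T + 4 * minus_mass y + 1 + B \<le> real k"
  shows "real (card X) / 8 * (\<sigma> / (1 + \<sigma>)) ^ k
    \<le> real (card {x\<in>X. T \<le> real_of_int (\<Sum>p | prime p \<and> f p x \<noteq> 0. f p x)})"
proof -
  have "{x\<in>X. 0 < plus_tuples x \<and> minus_count y x < 4 * minus_mass y + 1}
      \<subseteq> {x\<in>X. T \<le> real_of_int (\<Sum>p | prime p \<and> f p x \<noteq> 0. f p x)}"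
  proof safe
    fix x assume x: "x \<in> X" "0 < plus_tuples x" "minus_count y x < 4 * minus_mass y + 1"
    show "T \<le> real_of_int (\<Sum>p | prime p \<and> f p x \<noteq> 0. f p x)"
      using signed_sum_ge[OF signs[OF x(1)] finite_support[OF x(1)] x(2), of y]
        few_large[OF x(1)] x(3) enough_blocks by linarith
  qed
  then have "card {x\<in>X. 0 < plus_tuples x \<and> minus_count y x < 4 * minus_mass y + 1}
      \<le> card {x\<in>X. T \<le> real_of_int (\<Sum>p | prime p \<and> f p x \<noteq> 0. f p x)}"
    using finite_X by (intro card_mono) simp_all
  then show ?thesis
    using card_plus_tuples_pos_ge[OF y] by linarith
qed

end

section \<open>Blocks from the Mertens-type estimate\<close>

lemma mertens_increment:
  fixes g :: "nat \<Rightarrow> real"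
  assumes mertens: "\<And>N. 2 \<le> N \<Longrightarrow>
      \<bar>(\<Sum>p | prime p \<and> real p \<le> N. g p) - (c * ln (ln N) + M)\<bar> \<le> K / ln N"
    and "2 \<le> x" "x \<le> y"
  shows "c * (ln (ln y) - ln (ln x)) - 2 * \<bar>K\<bar> / ln x
    \<le> (\<Sum>p | prime p \<and> x < real p \<and> real p \<le> y. g p)"
proof -
  define S where "S N = (\<Sum>p | prime p \<and> real p \<le> N. g p)" for N
  have err: "\<bar>S N - (c * ln (ln N) + M)\<bar> \<le> \<bar>K\<bar> / ln x" if "x \<le> N" for N
  proof -
    have "K / ln N \<le> \<bar>K\<bar> / ln x"
      by (rule frac_le) (use assms(2) that in auto)
    then show ?thesis
      using mertens[of N] that assms(2) by (simp add: S_def)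
  qed
  have "{p. prime p \<and> x < real p \<and> real p \<le> y}
      = {p. prime p \<and> real p \<le> y} - {p. prime p \<and> real p \<le> x}"
    by auto
  moreover have "finite {p. prime p \<and> real p \<le> y}"
    by (rule finite_bounded_nat_set) auto
  moreover have "{p. prime p \<and> real p \<le> x} \<subseteq> {p. prime p \<and> real p \<le> y}"
    using assms(3) by auto
  ultimately have "(\<Sum>p | prime p \<and> x < real p \<and> real p \<le> y. g p) = S y - S x"
    unfolding S_def by (simp only: sum_diff)
  moreover have "2 * \<bar>K\<bar> / ln x = 2 * (\<bar>K\<bar> / ln x)"
    by simp
  ultimately show ?thesis
    using err[of x] err[of y] assms(3) unfolding abs_le_iff right_diff_distrib by linarith
qed

lemma power_card_greater_le_prod:
  fixes F :: "nat set"
  assumes "finite F" "\<And>p. p \<in> F \<Longrightarrow> 0 < p" "0 \<le> y"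
  shows "y ^ card {p\<in>F. y < real p} \<le> real (\<Prod>F)"
proof -
  define G where "G = {p\<in>F. y < real p}"
  have "y ^ card G = (\<Prod>p\<in>G. y)"
    by simp
  also have "\<dots> \<le> (\<Prod>p\<in>G. real p)"
    using assms(3) by (intro prod_mono) (auto simp: G_def)
  also have "\<dots> = real (\<Prod>G)"
    by simp
  also have "\<dots> \<le> real (\<Prod>F)"
  proof -
    have "\<Prod>G dvd \<Prod>F"
      using assms(1) by (intro prod_dvd_prod_subset) (auto simp: G_def)
    moreover have "0 < \<Prod>F"
      using assms(1,2) by (intro prod_pos) auto
    ultimately have "\<Prod>G \<le> \<Prod>F"
      by (rule dvd_imp_le)
    then show ?thesis
      by (simp only: of_nat_le_iff)
  qed
  finally show ?thesis
    by (simp add: G_def)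
qed

locale signed_prime_sieve =
  fixes A :: "'a set" and h :: "'a \<Rightarrow> real" and f :: "nat \<Rightarrow> 'a \<Rightarrow> int"
    and \<xi> c\<^sub>p c\<^sub>m C M\<^sub>p M\<^sub>m K\<^sub>d K\<^sub>p K\<^sub>m K\<^sub>s :: real and \<eta>\<^sub>p \<eta>\<^sub>m :: "nat \<Rightarrow> real"
  assumes finite_level: "\<And>N. finite (upto_height A h N)"
    and sign_range: "\<And>p x. prime p \<Longrightarrow> x \<in> A \<Longrightarrow> f p x \<in> {-1, 0, 1}"
    and xi_pos: "0 < \<xi>"
    and multiplicative_p: "multiplicative \<eta>\<^sub>p" and multiplicative_m: "multiplicative \<eta>\<^sub>m"
    and eta_p_nonneg: "\<And>p. prime p \<Longrightarrow> 0 \<le> \<eta>\<^sub>p p"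
    and eta_m_nonneg: "\<And>p. prime p \<Longrightarrow> 0 \<le> \<eta>\<^sub>m p"
    and density: "\<And>N q\<^sub>m q\<^sub>p. 2 \<le> N \<Longrightarrow> q\<^sub>m > 0 \<Longrightarrow> q\<^sub>p > 0 \<Longrightarrow>
      squarefree q\<^sub>m \<Longrightarrow> squarefree q\<^sub>p \<Longrightarrow> coprime q\<^sub>m q\<^sub>p \<Longrightarrow> real (q\<^sub>m * q\<^sub>p) \<le> N powr (\<xi> / 2) \<Longrightarrow>
      \<bar>real (card {x \<in> upto_height A h N.
                  (\<forall>p. prime p \<longrightarrow> p dvd q\<^sub>m \<longrightarrow> f p x = -1) \<and>
                  (\<forall>p. prime p \<longrightarrow> p dvd q\<^sub>p \<longrightarrow> f p x = 1)})
          / real (card (upto_height A h N)) - \<eta>\<^sub>m q\<^sub>m * \<eta>\<^sub>p q\<^sub>p\<bar> \<le> K\<^sub>d * N powr (- \<xi>)"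
    and cp_pos: "0 < c\<^sub>p" and cm_nonneg: "0 \<le> c\<^sub>m" and C_nonneg: "0 \<le> C"
    and mertens_p: "\<And>N. 2 \<le> N \<Longrightarrow>
      \<bar>(\<Sum>p | prime p \<and> real p \<le> N. \<eta>\<^sub>p p) - (c\<^sub>p * ln (ln N) + M\<^sub>p)\<bar> \<le> K\<^sub>p / ln N"
    and mertens_m: "\<And>N. 2 \<le> N \<Longrightarrow>
      \<bar>(\<Sum>p | prime p \<and> real p \<le> N. \<eta>\<^sub>m p) - (c\<^sub>m * ln (ln N) + M\<^sub>m)\<bar> \<le> K\<^sub>m / ln N"
    and support: "\<And>N x. 2 \<le> N \<Longrightarrow> x \<in> upto_height A h N \<Longrightarrow>
      finite {p. prime p \<and> f p x \<noteq> 0} \<and> real (\<Prod>p | prime p \<and> f p x \<noteq> 0. p) \<le> K\<^sub>s * N powr C"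
begin

lemma equidistributed_at_level:
  assumes "2 \<le> N" "0 < \<epsilon>" "\<epsilon> \<le> \<xi>"
  shows "sign_patterns_equidistributed (upto_height A h N) f \<eta>\<^sub>m \<eta>\<^sub>p
    (N powr (\<epsilon> / 2)) (\<bar>K\<^sub>d\<bar> * N powr (- \<epsilon>))"
proof (rule sign_patterns_equidistributed_mono)
  show "sign_patterns_equidistributed (upto_height A h N) f \<eta>\<^sub>m \<eta>\<^sub>p
      (N powr (\<xi> / 2)) (K\<^sub>d * N powr (- \<xi>))"
    using density[OF assms(1)] finite_level multiplicative_m multiplicative_p
    by (intro sign_patterns_equidistributedI)
  show "N powr (\<epsilon> / 2) \<le> N powr (\<xi> / 2)"
    using assms by (intro powr_mono) auto
  have "N powr (- \<xi>) \<le> N powr (- \<epsilon>)"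
    using assms by (intro powr_mono) auto
  then have "\<bar>K\<^sub>d\<bar> * N powr (- \<xi>) \<le> \<bar>K\<^sub>d\<bar> * N powr (- \<epsilon>)"
    by (intro mult_left_mono) auto
  moreover have "K\<^sub>d * N powr (- \<xi>) \<le> \<bar>K\<^sub>d\<bar> * N powr (- \<xi>)"
    by (intro mult_right_mono) auto
  ultimately show "K\<^sub>d * N powr (- \<xi>) \<le> \<bar>K\<^sub>d\<bar> * N powr (- \<epsilon>)"
    by linarith
qed

end

locale signed_prime_sieve_target = signed_prime_sieve +
  fixes A\<^sub>0 :: real
  assumes A0_pos: "0 < A\<^sub>0"
begin

text \<open>Block \<open>i\<close> is \<open>(threshold i, threshold (i + 1)]\<close>, where \<open>ln (ln (threshold i)) = ln \<tau> + i / (2\<alpha>)\<close>;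
  by the Mertens-type estimate its \<open>\<eta>\<^sub>p\<close>-mass is \<open>c\<^sub>p / (2\<alpha>)\<close> up to an error that the choice of \<open>\<tau>\<close>
  keeps below \<open>c\<^sub>p / (4\<alpha>)\<close>. With at most \<open>\<alpha> ln (ln N)\<close> blocks, a product of one prime from each
  block is at most \<open>exp (\<alpha> \<tau> ln (ln N) sqrt (ln N)) \<le> cutoff N\<close>. Beyond \<open>A\<^sub>0 ln (ln N)\<close>, the
  number of blocks absorbs the primes up to \<open>cutoff N\<close> with \<open>f p x = -1\<close> and the at most \<open>\<beta>\<close>
  primes above \<open>cutoff N\<close> with \<open>f p x \<noteq> 0\<close>.\<close>

definition \<epsilon> :: real where "\<epsilon> = min \<xi> 1"
definition \<alpha> :: real where "\<alpha> = A\<^sub>0 + 4 * c\<^sub>m + 1"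
definition \<sigma> :: real where "\<sigma> = min 1 (c\<^sub>p / (4 * \<alpha>))"
definition \<tau> :: real where "\<tau> = 1 + 8 * \<alpha> * \<bar>K\<^sub>p\<bar> / c\<^sub>p"
definition \<beta> :: real where "\<beta> = 4 * C / \<epsilon> + 1"
definition \<delta> :: real where "\<delta> = \<alpha> * ln ((1 + \<sigma>) / \<sigma>)"

definition threshold :: "nat \<Rightarrow> real"
  where "threshold i = exp (\<tau> * exp (real i / (2 * \<alpha>)))"

definition block :: "nat \<Rightarrow> nat set"
  where "block i = {p. prime p \<and> threshold i < real p \<and> real p \<le> threshold (Suc i)}"

definition cutoff :: "real \<Rightarrow> real"
  where "cutoff N = N powr (\<epsilon> / 4)"

definition num_blocks :: "real \<Rightarrow> nat"
  where "num_blocks N =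
    nat \<lceil>A\<^sub>0 * ln (ln N) + 4 * (\<Sum>p | prime p \<and> real p \<le> cutoff N. \<eta>\<^sub>m p) + 1 + \<beta>\<rceil>"

definition large :: "real \<Rightarrow> bool"
  where "large N \<longleftrightarrow> 2 \<le> N \<and> 4 * (\<bar>M\<^sub>m\<bar> + \<bar>K\<^sub>m\<bar>) + \<beta> + 2 \<le> ln (ln N) \<and> 4 \<le> \<epsilon> * ln N
    \<and> 4 * \<bar>ln K\<^sub>s\<bar> \<le> \<epsilon> * ln N \<and> 4 * \<alpha> * \<tau> * ln (ln N) * sqrt (ln N) \<le> \<epsilon> * ln N
    \<and> 8 * \<bar>K\<^sub>d\<bar> * N powr (- \<epsilon> / 2) \<le> ln N powr (2 * \<alpha> * ln \<sigma>)"

lemma eps_bounds: "0 < \<epsilon>" "\<epsilon> \<le> \<xi>" "\<epsilon> \<le> 1"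
  using xi_pos by (auto simp: \<epsilon>_def)

lemma alpha_gt_1: "1 < \<alpha>"
  using A0_pos cm_nonneg by (simp add: \<alpha>_def)

lemma sigma_bounds: "0 < \<sigma>" "\<sigma> \<le> 1"
  using cp_pos alpha_gt_1 by (auto simp: \<sigma>_def)

lemma tau_ge_1: "1 \<le> \<tau>"
  using cp_pos alpha_gt_1 by (simp add: \<tau>_def)

lemma beta_pos: "0 < \<beta>"
  unfolding \<beta>_def using C_nonneg eps_bounds by (intro add_nonneg_pos) simp_all

lemma delta_pos: "0 < \<delta>"
  using sigma_bounds alpha_gt_1 by (simp add: \<delta>_def field_simps)

lemma ln_threshold: "ln (threshold i) = \<tau> * exp (real i / (2 * \<alpha>))"
  by (simp add: threshold_def)

lemma threshold_ge_2: "2 \<le> threshold i"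
proof -
  have "1 \<le> \<tau> * exp (real i / (2 * \<alpha>))"
    using tau_ge_1 alpha_gt_1 by (intro order.trans[OF _ mult_mono[of 1 \<tau> 1]]) auto
  then have "exp 1 \<le> threshold i"
    by (simp add: threshold_def)
  then show ?thesis
    using exp_ge_add_one_self[of 1] by linarith
qed

lemma threshold_mono: "i \<le> j \<Longrightarrow> threshold i \<le> threshold j"
  using tau_ge_1 alpha_gt_1 by (simp add: threshold_def divide_right_mono)

lemma block_mass_ge: "\<sigma> \<le> (\<Sum>p\<in>block i. \<eta>\<^sub>p p)"
proof -
  have ln_ln: "ln (ln (threshold j)) = ln \<tau> + real j / (2 * \<alpha>)" for j
    using tau_ge_1 by (simp add: ln_threshold ln_mult)
  have "2 * \<bar>K\<^sub>p\<bar> / ln (threshold i) \<le> 2 * \<bar>K\<^sub>p\<bar> / \<tau>"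
    using tau_ge_1 alpha_gt_1 by (intro divide_left_mono) (auto simp: ln_threshold)
  also have "\<dots> \<le> c\<^sub>p / (4 * \<alpha>)"
  proof -
    have "8 * \<alpha> * \<bar>K\<^sub>p\<bar> \<le> c\<^sub>p * \<tau>"
      using cp_pos by (simp add: \<tau>_def field_simps)
    moreover have "0 < \<tau>" "0 < \<alpha>"
      using tau_ge_1 alpha_gt_1 by auto
    ultimately show ?thesis
      by (simp add: field_simps)
  qed
  finally have error: "2 * \<bar>K\<^sub>p\<bar> / ln (threshold i) \<le> c\<^sub>p / (4 * \<alpha>)" .
  have half: "c\<^sub>p * (1 / (2 * \<alpha>)) - c\<^sub>p / (4 * \<alpha>) = c\<^sub>p / (4 * \<alpha>)"
    by (simp add: field_simps)
  have increment: "ln (ln (threshold (Suc i))) - ln (ln (threshold i)) = 1 / (2 * \<alpha>)"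
    by (simp add: ln_ln add_divide_distrib)
  have "c\<^sub>p / (4 * \<alpha>)
      \<le> c\<^sub>p * (ln (ln (threshold (Suc i))) - ln (ln (threshold i))) - 2 * \<bar>K\<^sub>p\<bar> / ln (threshold i)"
    unfolding increment using half error by linarith
  also have "\<dots> \<le> (\<Sum>p\<in>block i. \<eta>\<^sub>p p)"
    unfolding block_def using mertens_p threshold_ge_2 threshold_mono[of i "Suc i"]
    by (intro mertens_increment) auto
  finally show ?thesis
    by (simp add: \<sigma>_def)
qed

lemma eventually_large: "eventually large at_top"
proof -
  have "0 < \<epsilon>" "0 < \<alpha>" "0 < \<tau>"
    using eps_bounds alpha_gt_1 tau_ge_1 by auto
  then show ?thesis
    unfolding large_def by (intro eventually_conj; real_asymp)
qed

lemma large_ln_ln: "large N \<Longrightarrow> 4 * (\<bar>M\<^sub>m\<bar> + \<bar>K\<^sub>m\<bar>) + \<beta> + 2 \<le> ln (ln N)"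
  and large_ln: "large N \<Longrightarrow> 4 \<le> \<epsilon> * ln N"
  and large_ge_2: "large N \<Longrightarrow> 2 \<le> N"
  and large_ln_Ks: "large N \<Longrightarrow> 4 * \<bar>ln K\<^sub>s\<bar> \<le> \<epsilon> * ln N"
  by (simp_all add: large_def)

lemma ln_cutoff: "large N \<Longrightarrow> ln (cutoff N) = \<epsilon> * ln N / 4"
  using large_ge_2 by (simp add: cutoff_def)

lemma one_le_ln_cutoff: "large N \<Longrightarrow> 1 \<le> ln (cutoff N)"
  using large_ln by (simp add: ln_cutoff)

lemma cutoff_ge_2: "large N \<Longrightarrow> 2 \<le> cutoff N"
proof -
  assume N: "large N"
  have "0 < cutoff N"
    using large_ge_2[OF N] by (simp add: cutoff_def)
  then have "exp 1 \<le> cutoff N"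
    using one_le_ln_cutoff[OF N] by (simp add: ln_ge_iff)
  then show ?thesis
    using exp_ge_add_one_self[of 1] by linarith
qed

lemma sum_eta_m_cutoff_nonneg: "0 \<le> (\<Sum>p | prime p \<and> real p \<le> cutoff N. \<eta>\<^sub>m p)"
  by (intro sum_nonneg eta_m_nonneg) auto

lemma sum_eta_m_cutoff_le:
  "large N \<Longrightarrow> (\<Sum>p | prime p \<and> real p \<le> cutoff N. \<eta>\<^sub>m p) \<le> c\<^sub>m * ln (ln N) + \<bar>M\<^sub>m\<bar> + \<bar>K\<^sub>m\<bar>"
proof -
  assume N: "large N"
  have "0 < ln N"
    using large_ge_2[OF N] by simp
  then have "ln (cutoff N) \<le> ln N"
    using eps_bounds(3) mult_right_mono[OF eps_bounds(3), of "ln N"] by (simp add: ln_cutoff[OF N])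
  then have "ln (ln (cutoff N)) \<le> ln (ln N)"
    using one_le_ln_cutoff[OF N] by simp
  then have "c\<^sub>m * ln (ln (cutoff N)) \<le> c\<^sub>m * ln (ln N)"
    using cm_nonneg by (rule mult_left_mono)
  moreover have "K\<^sub>m / ln (cutoff N) \<le> \<bar>K\<^sub>m\<bar> / 1"
    by (rule frac_le) (use one_le_ln_cutoff[OF N] in auto)
  ultimately show ?thesis
    using mertens_m[OF cutoff_ge_2[OF N]] unfolding abs_le_iff by linarith
qed

lemma num_blocks_le: "large N \<Longrightarrow> real (num_blocks N) \<le> \<alpha> * ln (ln N)"
proof -
  assume N: "large N"
  define x where
    "x = A\<^sub>0 * ln (ln N) + 4 * (\<Sum>p | prime p \<and> real p \<le> cutoff N. \<eta>\<^sub>m p) + 1 + \<beta>"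
  have "0 \<le> 4 * (\<bar>M\<^sub>m\<bar> + \<bar>K\<^sub>m\<bar>) + \<beta> + 2"
    using beta_pos by simp
  then have "0 \<le> ln (ln N)"
    using large_ln_ln[OF N] by (rule order.trans)
  then have "0 \<le> x"
    using A0_pos beta_pos sum_eta_m_cutoff_nonneg[of N] by (simp add: x_def)
  then have "real (num_blocks N) \<le> x + 1"
    unfolding num_blocks_def x_def[symmetric] by linarith
  also have "\<dots> \<le> \<alpha> * ln (ln N)"
    using sum_eta_m_cutoff_le[OF N] large_ln_ln[OF N] by (simp add: x_def \<alpha>_def algebra_simps)
  finally show ?thesis .
qed

lemma threshold_power_le_cutoff:
  assumes N: "large N"
  shows "threshold (num_blocks N) ^ num_blocks N \<le> cutoff N"
proof -
  define k where "k = num_blocks N"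
  have ln_N: "0 < ln N"
    using large_ge_2[OF N] by simp
  have "exp (real k / (2 * \<alpha>)) \<le> exp (ln (ln N) / 2)"
    using num_blocks_le[OF N] alpha_gt_1 by (simp add: k_def field_simps)
  also have "\<dots> = sqrt (ln N)"
    using ln_N by (simp add: powr_half_sqrt[symmetric] powr_def)
  finally have "real k * (\<tau> * exp (real k / (2 * \<alpha>))) \<le> \<alpha> * ln (ln N) * (\<tau> * sqrt (ln N))"
    using num_blocks_le[OF N] tau_ge_1 by (intro mult_mono) (auto simp: k_def)
  also have "\<dots> \<le> ln (cutoff N)"
    using N by (simp add: large_def ln_cutoff algebra_simps)
  finally have "exp (real k * ln (threshold k)) \<le> exp (ln (cutoff N))"
    by (simp add: ln_threshold)
  then show ?thesis
    using cutoff_ge_2[OF N] by (simp add: exp_of_nat_mult k_def threshold_def)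
qed

lemma threshold_power_mul_cutoff_le:
  assumes N: "large N"
  shows "threshold (num_blocks N) ^ num_blocks N * cutoff N \<le> N powr (\<epsilon> / 2)"
proof -
  have "threshold (num_blocks N) ^ num_blocks N * cutoff N \<le> cutoff N * cutoff N"
    using threshold_power_le_cutoff[OF N] cutoff_ge_2[OF N] by (intro mult_right_mono) simp_all
  then show ?thesis
    by (simp add: cutoff_def powr_add[symmetric])
qed

lemma level_error_le:
  assumes N: "large N"
  shows "8 * (N powr (\<epsilon> / 2) * (\<bar>K\<^sub>d\<bar> * N powr (- \<epsilon>))) \<le> \<sigma> ^ (2 * num_blocks N)"
proof -
  have "8 * (N powr (\<epsilon> / 2) * (\<bar>K\<^sub>d\<bar> * N powr (- \<epsilon>))) = 8 * \<bar>K\<^sub>d\<bar> * N powr (- \<epsilon> / 2)"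
    by (simp add: powr_add[symmetric] mult_ac)
  also have "\<dots> \<le> ln N powr (2 * \<alpha> * ln \<sigma>)"
    using N by (simp add: large_def)
  also have "\<dots> = \<sigma> powr (2 * \<alpha> * ln (ln N))"
    using sigma_bounds large_ge_2[OF N] by (simp add: powr_def)
  also have "\<dots> \<le> \<sigma> powr real (2 * num_blocks N)"
    using num_blocks_le[OF N] sigma_bounds by (intro powr_mono') auto
  also have "\<dots> = \<sigma> ^ (2 * num_blocks N)"
    by (rule powr_realpow[OF sigma_bounds(1)])
  finally show ?thesis .
qed

lemma few_large_prime_factors:
  assumes N: "large N" and x: "x \<in> upto_height A h N"
  shows "real (card {p. prime p \<and> f p x \<noteq> 0 \<and> cutoff N < real p}) \<le> \<beta>"
proof -
  define F where "F = {p. prime p \<and> f p x \<noteq> 0}"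
  define c where "c = card {p\<in>F. cutoff N < real p}"
  have F: "finite F" "real (\<Prod>F) \<le> K\<^sub>s * N powr C"
    using support[OF large_ge_2[OF N] x] by (simp_all add: F_def)
  have "cutoff N ^ c \<le> K\<^sub>s * N powr C"
    using power_card_greater_le_prod[OF F(1), of "cutoff N"] F(2) cutoff_ge_2[OF N]
    by (simp add: F_def prime_gt_0_nat c_def)
  moreover have "0 < cutoff N ^ c"
    using cutoff_ge_2[OF N] by simp
  ultimately have ln_le: "ln (cutoff N ^ c) \<le> ln (K\<^sub>s * N powr C)" and "0 < K\<^sub>s * N powr C"
    by simp_all
  then have "0 < K\<^sub>s"
    using large_ge_2[OF N] by (simp add: zero_less_mult_iff)
  then have "real c * (\<epsilon> * ln N / 4) \<le> ln K\<^sub>s + C * ln N"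
    using ln_le large_ge_2[OF N] cutoff_ge_2[OF N]
    by (simp add: ln_realpow ln_mult ln_cutoff[OF N])
  also have "\<dots> \<le> \<epsilon> * ln N / 4 + C * ln N"
    using large_ln_Ks[OF N] abs_ge_self[of "ln K\<^sub>s"] by linarith
  also have "\<dots> = (1 + 4 * C / \<epsilon>) * (\<epsilon> * ln N / 4)"
    using eps_bounds by (simp add: field_simps)
  finally have "real c \<le> \<beta>"
    using eps_bounds large_ge_2[OF N] by (simp add: \<beta>_def mult_le_cancel_right)
  then show ?thesis
    by (simp add: c_def F_def conj_assoc)
qed

lemma power_ratio_ge: "large N \<Longrightarrow> ln N powr (- \<delta>) \<le> (\<sigma> / (1 + \<sigma>)) ^ num_blocks N"
proof -
  assume N: "large N"
  have q: "0 < \<sigma> / (1 + \<sigma>)" "\<sigma> / (1 + \<sigma>) \<le> 1"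
    using sigma_bounds by auto
  have "ln N powr (- \<delta>) = (\<sigma> / (1 + \<sigma>)) powr (\<alpha> * ln (ln N))"
    using sigma_bounds large_ge_2[OF N] by (simp add: powr_def \<delta>_def ln_div algebra_simps)
  also have "\<dots> \<le> (\<sigma> / (1 + \<sigma>)) powr real (num_blocks N)"
    using num_blocks_le[OF N] q by (intro powr_mono') auto
  also have "\<dots> = (\<sigma> / (1 + \<sigma>)) ^ num_blocks N"
    using q by (simp add: powr_realpow)
  finally show ?thesis .
qed

lemma prime_block_sieve_mass_at:
  assumes N: "large N"
  shows "prime_block_sieve_mass (upto_height A h N) f \<eta>\<^sub>m \<eta>\<^sub>p block (num_blocks N)
    (threshold (num_blocks N)) (N powr (\<epsilon> / 2)) (\<bar>K\<^sub>d\<bar> * N powr (- \<epsilon>)) \<sigma>"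
proof unfold_locales
  define k where "k = num_blocks N"
  show "finite (upto_height A h N)"
    by (rule finite_level)
  show "sign_patterns_equidistributed (upto_height A h N) f \<eta>\<^sub>m \<eta>\<^sub>p
      (N powr (\<epsilon> / 2)) (\<bar>K\<^sub>d\<bar> * N powr (- \<epsilon>))"
    by (rule equidistributed_at_level[OF large_ge_2[OF N] eps_bounds(1,2)])
  show "0 \<le> \<eta>\<^sub>m p" "0 \<le> \<eta>\<^sub>p p" if "prime p" for p
    using that by (simp_all add: eta_m_nonneg eta_p_nonneg)
  show "prime p \<and> real p \<le> threshold k" if "i < k" "p \<in> block i" for i p
    using that threshold_mono[of "Suc i" k] by (auto simp: block_def)
  show "block i \<inter> block j = {}" if "i \<noteq> j" for i j
  proof -
    have disjoint: "block i \<inter> block j = {}" if "i < j" for i j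
    proof -
      have "threshold (Suc i) \<le> threshold j"
        using that by (intro threshold_mono) simp
      then show ?thesis
        by (auto simp: block_def)
    qed
    show ?thesis
      using disjoint[of i j] disjoint[of j i] \<open>i \<noteq> j\<close> by (cases "i < j") (auto simp: Int_commute)
  qed
  show "1 \<le> threshold k"
    using threshold_ge_2[of k] by linarith
  show "0 \<le> \<bar>K\<^sub>d\<bar> * N powr (- \<epsilon>)"
    by simp
  have "threshold k ^ (2 * k) = threshold k ^ k * threshold k ^ k"
    by (simp add: mult_2 power_add)
  also have "\<dots> \<le> threshold k ^ k * cutoff N"
    using threshold_power_le_cutoff[OF N] threshold_ge_2[of k]
    by (intro mult_left_mono) (simp_all add: k_def)
  also have "\<dots> \<le> N powr (\<epsilon> / 2)"
    using threshold_power_mul_cutoff_le[OF N] by (simp add: k_def)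
  finally show "threshold k ^ (2 * k) \<le> N powr (\<epsilon> / 2)" .
  show "\<sigma> \<le> (\<Sum>p\<in>block i. \<eta>\<^sub>p p)" for i
    by (rule block_mass_ge)
  show "0 < \<sigma>" "\<sigma> \<le> 1"
    by (rule sigma_bounds)+
  show "8 * (N powr (\<epsilon> / 2) * (\<bar>K\<^sub>d\<bar> * N powr (- \<epsilon>))) \<le> \<sigma> ^ (2 * k)"
    using level_error_le[OF N] by (simp add: k_def)
qed

lemma card_large_signed_sum_lower_bound:
  assumes N: "large N"
  shows "1 / 8 * real (card (upto_height A h N)) * ln N powr (- \<delta>)
    \<le> real (card {x \<in> upto_height A h N.
                 A\<^sub>0 * ln (ln N) \<le> real_of_int (\<Sum>p | prime p \<and> f p x \<noteq> 0. f p x)})"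
proof -
  define k where "k = num_blocks N"
  interpret blocks: prime_block_sieve_mass "upto_height A h N" f \<eta>\<^sub>m \<eta>\<^sub>p block k "threshold k"
    "N powr (\<epsilon> / 2)" "\<bar>K\<^sub>d\<bar> * N powr (- \<epsilon>)" \<sigma>
    unfolding k_def by (rule prime_block_sieve_mass_at[OF N])
  have "threshold k ^ k * cutoff N \<le> N powr (\<epsilon> / 2)"
    using threshold_power_mul_cutoff_le[OF N] by (simp add: k_def)
  moreover have "A\<^sub>0 * ln (ln N) + 4 * blocks.minus_mass (cutoff N) + 1 + \<beta> \<le> real k"
    unfolding k_def num_blocks_def blocks.minus_mass_def by linarith
  ultimately have "real (card (upto_height A h N)) / 8 * (\<sigma> / (1 + \<sigma>)) ^ k
      \<le> real (card {x \<in> upto_height A h N.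
                   A\<^sub>0 * ln (ln N) \<le> real_of_int (\<Sum>p | prime p \<and> f p x \<noteq> 0. f p x)})"
    using sign_range support[OF large_ge_2[OF N]] few_large_prime_factors[OF N] cutoff_ge_2[OF N]
    by (intro blocks.card_large_signed_sum) (auto simp: upto_height_def)
  moreover have "1 / 8 * real (card (upto_height A h N)) * ln N powr (- \<delta>)
      \<le> real (card (upto_height A h N)) / 8 * (\<sigma> / (1 + \<sigma>)) ^ k"
    using mult_left_mono[OF power_ratio_ge[OF N], of "real (card (upto_height A h N)) / 8"]
    by (simp add: k_def)
  ultimately show ?thesis
    by (rule order.trans[rotated])
qed

theorem many_large_signed_sums:
  "\<exists>\<delta>>0. \<exists>\<kappa>>0. \<exists>N\<^sub>0. \<forall>N::real. N \<ge> max 2 N\<^sub>0 \<longrightarrow>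
     real (card {x \<in> upto_height A h N.
             real_of_int (\<Sum>p\<in>{p. prime p \<and> f p x \<noteq> 0}. f p x) \<ge> A\<^sub>0 * ln (ln N)})
     \<ge> \<kappa> * real (card (upto_height A h N)) * (ln N) powr (- \<delta>)"
proof -
  obtain N\<^sub>0 where N\<^sub>0: "\<And>N. N \<ge> N\<^sub>0 \<Longrightarrow> large N"
    using eventually_large by (auto simp: eventually_at_top_linorder)
  have "\<forall>N::real. N \<ge> max 2 N\<^sub>0 \<longrightarrow>
     real (card {x \<in> upto_height A h N.
             real_of_int (\<Sum>p\<in>{p. prime p \<and> f p x \<noteq> 0}. f p x) \<ge> A\<^sub>0 * ln (ln N)})
     \<ge> 1 / 8 * real (card (upto_height A h N)) * (ln N) powr (- \<delta>)"
    using card_large_signed_sum_lower_bound N\<^sub>0 by simp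
  then show ?thesis
    using delta_pos by (intro exI[of _ \<delta>] exI[of _ "1 / 8"] exI[of _ N\<^sub>0] conjI) simp_all
qed

end

lemma (in signed_prime_sieve) signed_sum_lower_bound:
  assumes "0 < A\<^sub>0"
  shows "\<exists>\<delta>>0. \<exists>\<kappa>>0. \<exists>N\<^sub>0. \<forall>N::real. N \<ge> max 2 N\<^sub>0 \<longrightarrow>
    real (card {x \<in> upto_height A h N.
            real_of_int (\<Sum>p\<in>{p. prime p \<and> f p x \<noteq> 0}. f p x) \<ge> A\<^sub>0 * ln (ln N)})
    \<ge> \<kappa> * real (card (upto_height A h N)) * (ln N) powr (- \<delta>)"
proof -
  interpret signed_prime_sieve_target A h f \<xi> c\<^sub>p c\<^sub>m C M\<^sub>p M\<^sub>m K\<^sub>d K\<^sub>p K\<^sub>m K\<^sub>s \<eta>\<^sub>p \<eta>\<^sub>m A\<^sub>0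
    using assms by unfold_locales
  show ?thesis
    by (rule many_large_signed_sums)
qed

theorem theorem5p3:
  fixes A :: "'a set" and h :: "'a \<Rightarrow> real"
    and f :: "nat \<Rightarrow> 'a \<Rightarrow> int"
    and \<xi> c\<^sub>p c\<^sub>m C M\<^sub>p M\<^sub>m :: real
    and \<eta>\<^sub>p \<eta>\<^sub>m :: "nat \<Rightarrow> real"
  assumes infA: "infinite A"
    and finAN: "\<And>N. finite (upto_height A h N)"
    and size: "\<exists>k1 k2. k1 > 0 \<and> k2 > 0 \<and> (\<forall>N::real. N \<ge> 2 \<longrightarrow>
               k1 * ln N \<le> ln (real (card (upto_height A h N))) \<and>
               ln (real (card (upto_height A h N))) \<le> k2 * ln N)"
    and frange: "\<And>p x. prime p \<Longrightarrow> x \<in> A \<Longrightarrow> f p x \<in> {-1, 0, 1}"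
    and xi_pos: "\<xi> > 0"
    and mult_p: "multiplicative \<eta>\<^sub>p" and mult_m: "multiplicative \<eta>\<^sub>m"
    and range_p: "\<And>n. n > 0 \<Longrightarrow> 0 \<le> \<eta>\<^sub>p n \<and> \<eta>\<^sub>p n \<le> 1"
    and range_m: "\<And>n. n > 0 \<Longrightarrow> 0 \<le> \<eta>\<^sub>m n \<and> \<eta>\<^sub>m n \<le> 1"
    and density: "\<exists>K. \<forall>N::real. \<forall>qm qp :: nat. N \<ge> 2 \<longrightarrow> qm > 0 \<longrightarrow> qp > 0 \<longrightarrow>
               squarefree qm \<longrightarrow> squarefree qp \<longrightarrow> coprime qm qp \<longrightarrow>
               real (qm * qp) \<le> N powr (\<xi> / 2) \<longrightarrow>
               \<bar>real (card {x \<in> upto_height A h N.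
                        (\<forall>p. prime p \<longrightarrow> p dvd qm \<longrightarrow> f p x = -1) \<and>
                        (\<forall>p. prime p \<longrightarrow> p dvd qp \<longrightarrow> f p x = 1)})
                   / real (card (upto_height A h N))
                 - \<eta>\<^sub>m qm * \<eta>\<^sub>p qp\<bar> \<le> K * N powr (- \<xi>)"
    and consts_pos: "c\<^sub>p > 0" "c\<^sub>m > 0" "C > 0"
    and eta_p_small: "\<exists>K. \<forall>p. prime p \<longrightarrow> \<eta>\<^sub>p p \<le> K / real p"
    and eta_m_small: "\<exists>K. \<forall>p. prime p \<longrightarrow> \<eta>\<^sub>m p \<le> K / real p"
    and mertens_p: "\<exists>K. \<forall>N::real. N \<ge> 2 \<longrightarrow>
               \<bar>(\<Sum>p\<in>{p. prime p \<and> real p \<le> N}. \<eta>\<^sub>p p) - (c\<^sub>p * ln (ln N) + M\<^sub>p)\<bar> \<le> K / ln N"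
    and mertens_m: "\<exists>K. \<forall>N::real. N \<ge> 2 \<longrightarrow>
               \<bar>(\<Sum>p\<in>{p. prime p \<and> real p \<le> N}. \<eta>\<^sub>m p) - (c\<^sub>m * ln (ln N) + M\<^sub>m)\<bar> \<le> K / ln N"
    and support: "\<exists>K. \<forall>N::real. \<forall>x. N \<ge> 2 \<longrightarrow> x \<in> upto_height A h N \<longrightarrow>
               finite {p. prime p \<and> f p x \<noteq> 0} \<and>
               real (\<Prod>p\<in>{p. prime p \<and> f p x \<noteq> 0}. p) \<le> K * N powr C"
  shows "\<forall>A\<^sub>0::real. A\<^sub>0 > 0 \<longrightarrow> (\<exists>\<delta>>0. \<exists>\<kappa>>0. \<exists>N\<^sub>0. \<forall>N::real. N \<ge> max 2 N\<^sub>0 \<longrightarrow>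
           real (card {x \<in> upto_height A h N.
                   real_of_int (\<Sum>p\<in>{p. prime p \<and> f p x \<noteq> 0}. f p x) \<ge> A\<^sub>0 * ln (ln N)})
           \<ge> \<kappa> * real (card (upto_height A h N)) * (ln N) powr (- \<delta>))"
proof -
  have "\<And>p. prime p \<Longrightarrow> 0 \<le> \<eta>\<^sub>p p" "\<And>p. prime p \<Longrightarrow> 0 \<le> \<eta>\<^sub>m p"
    using range_p range_m prime_gt_0_nat by blast+
  moreover have "0 \<le> c\<^sub>m" "0 \<le> C"
    using consts_pos by simp_all
  ultimately have "\<exists>K\<^sub>d K\<^sub>p K\<^sub>m K\<^sub>s. signed_prime_sieve A h f \<xi> c\<^sub>p c\<^sub>m C M\<^sub>p M\<^sub>m K\<^sub>d K\<^sub>p K\<^sub>m K\<^sub>s \<eta>\<^sub>p \<eta>\<^sub>m"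
    using finAN frange xi_pos mult_p mult_m density consts_pos(1) mertens_p mertens_m support
    unfolding signed_prime_sieve_def by blast
  then show ?thesis
    using signed_prime_sieve.signed_sum_lower_bound by blast
qed

end
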